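(* Let $\Gamma:\Delta_{\mathcal{Y}}\rightrightarrows\mathbb{R}^d$ be an elicitable property. The following are equivalent: (1) $\Gamma$ embeds an elicitable finite property $\gamma:\Delta_{\mathcal{Y}}\rightrightarrows\mathcal{R}$; (2) $\mathrm{trim}(\Gamma)$ is a finite set; (3) there is a finite minimum representative set $\mathcal{U}$ for $\Gamma$; (4) there is a finite set $\hat\Theta$ of full-dimensional level sets of $\Gamma$ with $\bigcup\hat\Theta=\Delta_{\mathcal{Y}}$. Moreover, when any of these holds, $\mathrm{trim}(\gamma)=\mathrm{trim}(\Gamma)=\{\Gamma_u:u\in\mathcal{U}\}=\hat\Theta$.
   Context: $\mathcal{Y}$ is a finite label set, $\Delta_{\mathcal{Y}}$ the probability simplex. A property $\Gamma:\Delta_{\mathcal{Y}}\rightrightarrows\mathcal{R}$ maps each $p$ to a nonempty subset of $\mathcal{R}$; it is finite if $\mathcal{R}$ is finite; its level sets are $\Gamma_r=\{p:r\in\Gamma(p)\}$. $\Gamma$ is elicitable if there is a loss $L:\mathcal{R}\to\mathbb{R}^{\mathcal{Y}}_+$ with $\Gamma(p)=\arg\min_r\langle p,L(r)\rangle$ for all $p$ (minimum attained). $\mathcal{S}\subseteq\mathcal{R}$ is representative for $\Gamma$ if $\Gamma(p)\cap\mathcal{S}\neq\emptyset$ for all $p$; minimum representative if it has smallest cardinality among representative sets. A level set is full-dimensional if its affine hull has dimension $|\mathcal{Y}|-1$. $\mathrm{red}(\Gamma)=\{r:\exists r',\ \Gamma_r\subsetneq\Gamma_{r'}\}$ and $\mathrm{trim}(\Gamma)=\{\Gamma_r:r\in\mathcal{R}\setminus\mathrm{red}(\Gamma)\}$.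 $\Gamma:\Delta_{\mathcal{Y}}\rightrightarrows\mathbb{R}^d$ embeds a finite property $\gamma:\Delta_{\mathcal{Y}}\rightrightarrows\mathcal{R}$ if there exist a representative set $\mathcal{S}\subseteq\mathcal{R}$ for $\gamma$ and an injective $\varphi:\mathcal{S}\to\mathbb{R}^d$ with $\gamma_s=\Gamma_{\varphi(s)}$ for all $s\in\mathcal{S}$. *)

theory Defs
  imports "HOL-Analysis.Analysis"
begin

definition prob_simplex :: "(real ^ 'y) set" where
  "prob_simplex = {p. (\<forall>y. 0 \<le> p $ y) \<and> (\<Sum>y\<in>UNIV. p $ y) = 1}"

definition level :: "(real ^ 'y \<Rightarrow> 'r set) \<Rightarrow> 'r \<Rightarrow> (real ^ 'y) set" where
  "level G r = {p \<in> prob_simplex. r \<in> G p}"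

definition elicitable :: "'r set \<Rightarrow> (real ^ 'y \<Rightarrow> 'r set) \<Rightarrow> bool" where
  "elicitable R G \<longleftrightarrow> (\<exists>L :: 'r \<Rightarrow> real ^ 'y.
      (\<forall>r\<in>R. \<forall>y. 0 \<le> L r $ y) \<and>
      (\<forall>p\<in>prob_simplex. G p = {r\<in>R. \<forall>r'\<in>R. p \<bullet> L r \<le> p \<bullet> L r'} \<and> G p \<noteq> {}))"

definition representative :: "'r set \<Rightarrow> (real ^ 'y \<Rightarrow> 'r set) \<Rightarrow> 'r set \<Rightarrow> bool" where
  "representative R G S \<longleftrightarrow> S \<subseteq> R \<and> (\<forall>p\<in>prob_simplex. G p \<inter> S \<noteq> {})"

text \<open>Minimum representative: representative, and of cardinality at most that of every
  representative set (|S| \<le> |S'| means an injection S \<rightarrow> S').\<close>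
definition min_representative :: "'r set \<Rightarrow> (real ^ 'y \<Rightarrow> 'r set) \<Rightarrow> 'r set \<Rightarrow> bool" where
  "min_representative R G S \<longleftrightarrow> representative R G S \<and>
     (\<forall>S'. representative R G S' \<longrightarrow> (\<exists>f. inj_on f S \<and> f ` S \<subseteq> S'))"

definition full_dim :: "(real ^ 'y) set \<Rightarrow> bool" where
  "full_dim A \<longleftrightarrow> aff_dim A = int CARD('y) - 1"

definition red :: "'r set \<Rightarrow> (real ^ 'y \<Rightarrow> 'r set) \<Rightarrow> 'r set" where
  "red R G = {r\<in>R. \<exists>r'\<in>R. level G r \<subset> level G r'}"

definition trim :: "'r set \<Rightarrow> (real ^ 'y \<Rightarrow> 'r set) \<Rightarrow> (real ^ 'y) set set" where
  "trim R G = level G ` (R - red R G)"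

definition embeds :: "(real ^ 'y \<Rightarrow> 'd set) \<Rightarrow> 'r set \<Rightarrow> (real ^ 'y \<Rightarrow> 'r set) \<Rightarrow> bool" where
  "embeds G R g \<longleftrightarrow> (\<exists>S (\<phi> :: 'r \<Rightarrow> 'd). representative R g S \<and> inj_on \<phi> S \<and>
       (\<forall>s\<in>S. level g s = level G (\<phi> s)))"

end

theory Submission
  imports Defs
begin

(*
  A report r is optimal for p iff the linear inequalities p . (L r - L r') <= 0 hold for all r',
  so every level set is a convex polytope inside the simplex. A level set that is covered by
  finitely many level sets lies in one of them: otherwise averaging one witness per covering set
  yields a point violating all of their defining inequalities. Consequently, for every finite
  representative set U, trim consists exactly of the inclusion-maximal level sets among those
  indexed by U, which gives (1) <-> (2) <-> (3) and the equalities of the trims.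
  A strict inclusion of level sets strictly raises the dimension of their spans, so full-dimensional
  level sets are non-redundant. Conversely the lower-dimensional members of a finite cover have
  negligible cones, so the full-dimensional members alone already cover the simplex; hence every
  non-redundant level set is full-dimensional, which gives (2) <-> (4).
*)

lemma prob_simplex_eq:
  "prob_simplex = {p::real^'y. \<forall>i. 0 \<le> p $ i} \<inter> {p. (\<chi> i. 1) \<bullet> p = 1}"
  unfolding prob_simplex_def by (auto simp: inner_vec_def)

lemma convex_prob_simplex: "convex (prob_simplex :: (real^'y) set)"
  unfolding prob_simplex_eq
  by (intro convex_Int convex_hyperplane convex_box_cart) (simp add: atLeast_def[symmetric])

lemma closed_prob_simplex: "closed (prob_simplex :: (real^'y) set)"
  unfolding prob_simplex_eq by (intro closed_Int closed_positive_orthant closed_hyperplane)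

definition uniform_distribution :: "real^'y" where
  "uniform_distribution = (\<chi> i. 1 / real CARD('y))"

lemma uniform_distribution_pos: "0 < uniform_distribution $ i"
  by (simp add: uniform_distribution_def)

lemma uniform_distribution_in_prob_simplex: "uniform_distribution \<in> prob_simplex"
  by (simp add: prob_simplex_def uniform_distribution_def)

lemma prob_simplex_nonempty: "prob_simplex \<noteq> {}"
  using uniform_distribution_in_prob_simplex by blast

lemma open_Int_prob_simplex_positive:
  fixes p :: "real^'y"
  assumes "open V" "p \<in> V" "p \<in> prob_simplex"
  obtains x where "x \<in> V" "x \<in> prob_simplex" "\<And>i. 0 < x $ i"
proof (cases "p = uniform_distribution")
  case True
  then show ?thesis using assms that uniform_distribution_pos by blast
next
  case False
  let ?c = "uniform_distribution :: real^'y"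
  have "V \<inter> closure (open_segment p ?c) \<noteq> {}"
    using assms(2) False by auto
  then obtain x where x: "x \<in> V" "x \<in> open_segment p ?c"
    using open_Int_closure_eq_empty[OF assms(1)] by blast
  then obtain u where u: "0 < u" "x = (1 - u) *\<^sub>R p + u *\<^sub>R ?c" "u < 1"
    by (auto simp: in_segment)
  have "x \<in> prob_simplex"
    using x(2) assms(3) uniform_distribution_in_prob_simplex convex_prob_simplex
    by (meson closed_segment_subset open_closed_segment subsetD)
  moreover have "0 < x $ i" for i
  proof -
    have "0 \<le> (1 - u) * p $ i" using assms(3) u by (simp add: prob_simplex_def)
    moreover have "0 < u * ?c $ i" using u(1) uniform_distribution_pos by (rule mult_pos_pos)
    ultimately show ?thesis using u by simp
  qed
  ultimately show ?thesis using that x(1) by blast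
qed

lemma open_positive_rays_through:
  assumes "open V"
  shows "open {x::real^'y. (\<forall>i. 0 < x $ i) \<and> (1 / (\<Sum>i\<in>UNIV. x $ i)) *\<^sub>R x \<in> V}"
proof -
  define P where "P = {x::real^'y. \<forall>i. 0 < x $ i}"
  have "0 < (\<Sum>i\<in>UNIV. x $ i)" if "x \<in> P" for x
    using that by (simp add: P_def sum_pos)
  then have "continuous_on P (\<lambda>x. (1 / (\<Sum>i\<in>UNIV. x $ i)) *\<^sub>R x)"
    by (intro continuous_intros) (metis less_irrefl)
  moreover have "open P"
    unfolding P_def Collect_all_eq by (intro open_INT ballI open_halfspace_component_gt_cart) auto
  ultimately have "open (P \<inter> (\<lambda>x. (1 / (\<Sum>i\<in>UNIV. x $ i)) *\<^sub>R x) -` V)"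
    using assms by (intro continuous_open_preimage)
  then show ?thesis by (simp add: P_def Int_def)
qed

lemma prob_simplex_subset_closed_of_lowdim_cover:
  fixes F :: "(real^'y) set"
  assumes "closed F" "finite \<C>" "\<And>C. C \<in> \<C> \<Longrightarrow> dim C < CARD('y)"
    and cover: "prob_simplex \<subseteq> F \<union> \<Union>\<C>"
  shows "prob_simplex \<subseteq> F"
proof
  fix p :: "real^'y" assume p: "p \<in> prob_simplex"
  show "p \<in> F"
  proof (rule ccontr)
    assume "p \<notin> F"
    then obtain x0 where x0: "x0 \<notin> F" "x0 \<in> prob_simplex" "\<And>i. 0 < x0 $ i"
      using open_Int_prob_simplex_positive[of "- F" p] assms(1) p by auto
    txt \<open>The rays through the points of the simplex off F form a nonempty open cone, which
      would have to lie in the negligible union of the spans of the lower-dimensional sets.\<close>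
    define W
      where "W = {x::real^'y. (\<forall>i. 0 < x $ i) \<and> (1 / (\<Sum>i\<in>UNIV. x $ i)) *\<^sub>R x \<in> - F}"
    have "open W"
      unfolding W_def using assms(1) by (intro open_positive_rays_through) auto
    moreover have "x0 \<in> W"
      using x0 by (simp add: W_def prob_simplex_def)
    moreover have "W \<subseteq> (\<Union>C\<in>\<C>. span C)"
    proof
      fix x assume x: "x \<in> W"
      define s where "s = (\<Sum>i\<in>UNIV. x $ i)"
      have "0 < s" using x by (simp add: W_def s_def sum_pos)
      then have "(1 / s) *\<^sub>R x \<in> prob_simplex"
        using x by (auto simp: W_def prob_simplex_def s_def[symmetric] less_imp_le
            sum_divide_distrib[symmetric])
      then obtain C where "C \<in> \<C>" "(1 / s) *\<^sub>R x \<in> C"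
        using cover x by (auto simp: W_def s_def)
      moreover have "x = s *\<^sub>R ((1 / s) *\<^sub>R x)" using \<open>0 < s\<close> by simp
      ultimately show "x \<in> (\<Union>C\<in>\<C>. span C)"
        by (metis UN_iff span_base span_scale)
    qed
    moreover have "negligible (\<Union>C\<in>\<C>. span C)"
      using assms(2,3) by (intro negligible_Union negligible_lowdim) auto
    ultimately show False
      using open_not_negligible negligible_subset by blast
  qed
qed

lemma aff_dim_subset_prob_simplex:
  fixes A :: "(real^'y) set"
  assumes "A \<subseteq> prob_simplex"
  shows "aff_dim A = int (dim A) - 1"
proof -
  have "affine hull A \<subseteq> {x. (\<chi> i. 1) \<bullet> x = 1}"
    using assms unfolding prob_simplex_eq by (intro hull_minimal) (auto simp: affine_hyperplane)
  then have "0 \<notin> affine hull A" by auto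
  then have "aff_dim A + 1 = aff_dim (insert 0 A)" by (simp add: aff_dim_insert)
  also have "\<dots> = int (dim (insert 0 A))" by (simp add: aff_dim_zero hull_inc)
  also have "\<dots> = int (dim A)" by (simp add: dim_insert span_zero)
  finally show ?thesis by simp
qed

lemma full_dim_iff_dim:
  fixes A :: "(real^'y) set"
  assumes "A \<subseteq> prob_simplex"
  shows "full_dim A \<longleftrightarrow> dim A = CARD('y)"
  unfolding full_dim_def aff_dim_subset_prob_simplex[OF assms] by linarith

lemma full_dim_nonempty: "full_dim (A :: (real^'y) set) \<Longrightarrow> A \<noteq> {}"
  by (auto simp: full_dim_def)

lemma representative_iff_cover:
  "representative R G U \<longleftrightarrow> U \<subseteq> R \<and> prob_simplex \<subseteq> (\<Union>u\<in>U. level G u)"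
  unfolding representative_def level_def by blast

lemma convex_ex_common_positive:
  fixes a :: "'j \<Rightarrow> 'v::real_inner"
  assumes "finite J" "convex C" "C \<noteq> {}"
    and "\<And>j x. j \<in> J \<Longrightarrow> x \<in> C \<Longrightarrow> 0 \<le> x \<bullet> a j"
    and "\<And>j. j \<in> J \<Longrightarrow> \<exists>x\<in>C. 0 < x \<bullet> a j"
  shows "\<exists>q\<in>C. \<forall>j\<in>J. 0 < q \<bullet> a j"
  using assms(1,3-5)
proof (induction J rule: finite_induct)
  case empty
  then show ?case by auto
next
  case (insert j J)
  then obtain q where q: "q \<in> C" "\<forall>i\<in>J. 0 < q \<bullet> a i" by auto
  obtain x where x: "x \<in> C" "0 < x \<bullet> a j" using insert.prems(3) by blast
  have "(1/2) *\<^sub>R q + (1/2) *\<^sub>R x \<in> C"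
    using assms(2) q(1) x(1) by (simp add: convex_def)
  moreover have "0 < ((1/2) *\<^sub>R q + (1/2) *\<^sub>R x) \<bullet> a i" if "i \<in> insert j J" for i
    using that q x insert.prems(2)
    by (auto simp: inner_add_left intro: add_pos_nonneg add_nonneg_pos)
  ultimately show ?case by blast
qed

lemma level_subset_prob_simplex: "level G r \<subseteq> prob_simplex"
  by (auto simp: level_def)

lemma representative_Diff_singleton:
  assumes "representative R G U" "level G u \<subseteq> level G v" "v \<in> U" "v \<noteq> u"
  shows "representative R G (U - {u})"
  using assms unfolding representative_iff_cover by blast

locale elicits =
  fixes L :: "'r \<Rightarrow> real^'y" and R :: "'r set" and G :: "real^'y \<Rightarrow> 'r set"
  assumes G_eq: "p \<in> prob_simplex \<Longrightarrow> G p = {r\<in>R. \<forall>r'\<in>R. p \<bullet> L r \<le> p \<bullet> L r'}"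
    and G_nonempty: "p \<in> prob_simplex \<Longrightarrow> G p \<noteq> {}"

lemma elicitable_iff_elicits:
  "elicitable R G \<longleftrightarrow> (\<exists>L. (\<forall>r\<in>R. \<forall>y. 0 \<le> L r $ y) \<and> elicits L R G)"
  unfolding elicitable_def elicits_def by blast

context elicits
begin

lemma level_eq:
  "level G r = (if r \<in> R then prob_simplex \<inter> (\<Inter>r'\<in>R. {p. (L r - L r') \<bullet> p \<le> 0}) else {})"
  by (auto simp: level_def G_eq inner_commute[of "L _ - L _"] inner_diff_right)

lemma mem_R_of_level_nonempty: "level G r \<noteq> {} \<Longrightarrow> r \<in> R"
  by (auto simp: level_eq split: if_splits)

lemma closed_level: "closed (level G r)"
  by (auto simp: level_eq closed_prob_simplex closed_halfspace_le
      intro!: closed_Int closed_INT)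

lemma convex_level: "convex (level G r)"
  by (auto simp: level_eq convex_prob_simplex convex_halfspace_le
      intro!: convex_Int convex_INT)

lemma level_loss_le:
  assumes "p \<in> level G r" "r' \<in> R"
  shows "p \<bullet> L r \<le> p \<bullet> L r'"
  using assms by (auto simp: level_def G_eq)

lemma mem_level_iff:
  assumes "p \<in> level G r" "r' \<in> R"
  shows "p \<in> level G r' \<longleftrightarrow> p \<bullet> L r' \<le> p \<bullet> L r"
  using assms by (auto simp: level_def G_eq intro: order_trans)

text \<open>Within level G r each other level set is cut out by a single linear inequality, so
  averaging one witness per excluded level set violates all of them at once.\<close>
lemma level_avoid:
  assumes "finite J" "J \<subseteq> R" "level G r \<noteq> {}"
    and not_subset: "\<And>j. j \<in> J \<Longrightarrow> \<not> level G r \<subseteq> level G j"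
  obtains q where "q \<in> level G r" "\<And>j. j \<in> J \<Longrightarrow> q \<notin> level G j"
proof -
  have "\<exists>q\<in>level G r. \<forall>j\<in>J. 0 < q \<bullet> (L j - L r)"
  proof (rule convex_ex_common_positive[OF assms(1) convex_level assms(3)])
    show "0 \<le> x \<bullet> (L j - L r)" if "j \<in> J" "x \<in> level G r" for j x
      using that assms(2) level_loss_le by (auto simp: inner_diff_right)
    show "\<exists>x\<in>level G r. 0 < x \<bullet> (L j - L r)" if "j \<in> J" for j
      using that assms(2) not_subset[of j] mem_level_iff by (force simp: inner_diff_right)
  qed
  then show ?thesis
    using that assms(2) mem_level_iff by (force simp: inner_diff_right)
qed

lemma level_subset_level_of_representative:
  assumes "finite U" "representative R G U"
  shows "\<exists>u\<in>U. level G r \<subseteq> level G u"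
proof (rule ccontr)
  assume not_subset: "\<not> (\<exists>u\<in>U. level G r \<subseteq> level G u)"
  then have "level G r \<noteq> {}"
    using assms(2) prob_simplex_nonempty by (auto simp: representative_iff_cover)
  then obtain q where "q \<in> level G r" "\<And>u. u \<in> U \<Longrightarrow> q \<notin> level G u"
    using level_avoid[OF assms(1)] not_subset assms(2) by (metis representative_iff_cover)
  then show False
    using assms(2) by (auto simp: representative_iff_cover level_def)
qed

lemma dim_level_less:
  assumes r: "r \<in> R" and psubset: "level G r \<subset> level G r'"
  shows "dim (level G r) < dim (level G r')"
proof -
  have r': "r' \<in> R"
    using psubset mem_R_of_level_nonempty by blast
  define a where "a = L r - L r'"
  have "x \<in> level G r \<longleftrightarrow> x \<in> level G r' \<and> a \<bullet> x = 0" for x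
  proof
    assume x: "x \<in> level G r"
    then have "x \<in> level G r'" using psubset by blast
    then show "x \<in> level G r' \<and> a \<bullet> x = 0"
      using x r r' level_loss_le[of x r r'] level_loss_le[of x r' r]
      by (simp add: a_def inner_diff_left inner_diff_right inner_commute)
  next
    assume "x \<in> level G r' \<and> a \<bullet> x = 0"
    then show "x \<in> level G r"
      using r mem_level_iff[of x r' r]
      by (simp add: a_def inner_diff_left inner_diff_right inner_commute)
  qed
  then have hyperplane: "level G r = level G r' \<inter> {x. a \<bullet> x = 0}"
    by blast
  then obtain q where q: "q \<in> level G r'" "a \<bullet> q \<noteq> 0"
    using psubset by blast
  have "span (level G r) \<subseteq> {x. a \<bullet> x = 0}"
    by (rule span_minimal) (auto simp: hyperplane subspace_hyperplane)
  moreover have "span (level G r) \<subseteq> span (level G r')"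
    using psubset by (simp add: span_mono)
  moreover have "q \<in> span (level G r')"
    using q(1) by (rule span_base)
  ultimately have "span (level G r) \<subset> span (level G r')"
    using q(2) by blast
  then show ?thesis
    by (rule dim_psubset)
qed

lemma ex_nonredundant_superlevel:
  assumes "r \<in> R"
  obtains w where "w \<in> R - red R G" "level G r \<subseteq> level G w"
proof -
  have "\<exists>w. (w \<in> R \<and> level G r \<subseteq> level G w) \<and>
      (\<forall>w'. w' \<in> R \<and> level G r \<subseteq> level G w' \<longrightarrow> dim (level G w') \<le> dim (level G w))"
    using assms
    by (intro ex_has_greatest_nat[where b = "Suc CARD('y)"])
      (auto simp: le_imp_less_Suc dim_subset_UNIV_cart)
  then obtain w where w: "w \<in> R" "level G r \<subseteq> level G w"
    and max: "\<And>w'. w' \<in> R \<Longrightarrow> level G r \<subseteq> level G w' \<Longrightarrow>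
      dim (level G w') \<le> dim (level G w)"
    by blast
  have "w \<notin> red R G"
  proof
    assume "w \<in> red R G"
    then obtain w' where w': "w' \<in> R" "level G w \<subset> level G w'"
      by (auto simp: red_def)
    then have "dim (level G w) < dim (level G w')"
      using w(1) by (intro dim_level_less)
    moreover have "dim (level G w') \<le> dim (level G w)"
      using w' w(2) by (intro max) auto
    ultimately show False
      by simp
  qed
  then show ?thesis
    using that w by blast
qed

lemma representative_nonredundant: "representative R G (R - red R G)"
  unfolding representative_iff_cover
proof (intro conjI subsetI)
  fix p :: "real^'y" assume p: "p \<in> prob_simplex"
  then obtain r where "r \<in> G p"
    using G_nonempty by blast
  then have "r \<in> R" "p \<in> level G r"
    using p by (auto simp: G_eq level_def)
  then show "p \<in> (\<Union>w\<in>R - red R G. level G w)"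
    using ex_nonredundant_superlevel by blast
qed auto

lemma level_nonempty_of_nonredundant:
  assumes "r \<in> R - red R G"
  shows "level G r \<noteq> {}"
proof
  assume empty: "level G r = {}"
  obtain w where "w \<in> R" "level G w \<noteq> {}"
    using representative_nonredundant prob_simplex_nonempty
    by (fastforce simp: representative_iff_cover)
  then show False
    using assms empty by (auto simp: red_def)
qed

lemma nonredundant_of_full_dim:
  assumes "full_dim (level G r)"
  shows "r \<notin> red R G"
proof
  assume "r \<in> red R G"
  then obtain r' where "r \<in> R" "level G r \<subset> level G r'"
    by (auto simp: red_def)
  then have "dim (level G r) < dim (level G r')"
    by (rule dim_level_less)
  then show False
    using assms full_dim_iff_dim[OF level_subset_prob_simplex[of G r]]
      dim_subset_UNIV_cart[of "level G r'"]
    by simp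
qed

theorem trim_eq_maximal_levels:
  assumes U: "finite U" "representative R G U"
  shows "trim R G = {A \<in> level G ` U. \<forall>B \<in> level G ` U. \<not> A \<subset> B}"
proof
  have "U \<subseteq> R"
    using U(2) by (simp add: representative_def)
  show "trim R G \<subseteq> {A \<in> level G ` U. \<forall>B \<in> level G ` U. \<not> A \<subset> B}"
  proof
    fix A assume "A \<in> trim R G"
    then obtain r where r: "r \<in> R" "r \<notin> red R G" "A = level G r"
      by (auto simp: trim_def)
    obtain u where "u \<in> U" "level G r \<subseteq> level G u"
      using level_subset_level_of_representative[OF U] by blast
    then show "A \<in> {A \<in> level G ` U. \<forall>B \<in> level G ` U. \<not> A \<subset> B}"
      using r \<open>U \<subseteq> R\<close> by (auto simp: red_def)
  qed
  show "{A \<in> level G ` U. \<forall>B \<in> level G ` U. \<not> A \<subset> B} \<subseteq> trim R G"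
  proof
    fix A assume A: "A \<in> {A \<in> level G ` U. \<forall>B \<in> level G ` U. \<not> A \<subset> B}"
    then obtain u where u: "u \<in> U" "A = level G u"
      by blast
    have "u \<notin> red R G"
    proof
      assume "u \<in> red R G"
      then obtain w where "level G u \<subset> level G w"
        by (auto simp: red_def)
      moreover obtain v where "v \<in> U" "level G w \<subseteq> level G v"
        using level_subset_level_of_representative[OF U] by blast
      ultimately show False
        using A u by blast
    qed
    then show "A \<in> trim R G"
      using u \<open>U \<subseteq> R\<close> by (auto simp: trim_def)
  qed
qed

corollary finite_trim_of_representative:
  assumes "finite U" "representative R G U"
  shows "finite (trim R G)"
  using assms by (simp add: trim_eq_maximal_levels)

lemma ex_nonredundant_representative:
  assumes "finite (trim R G)"
  obtains U where "finite U" "U \<subseteq> R - red R G" "inj_on (level G) U" "representative R G U"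
proof -
  obtain U where U: "U \<subseteq> R - red R G" "inj_on (level G) U" "trim R G = level G ` U"
    using subset_image_inj[of "trim R G" "level G" "R - red R G"] by (auto simp: trim_def)
  have "representative R G U"
    using representative_nonredundant U unfolding representative_iff_cover
    by (auto simp: trim_def)
  moreover have "finite U"
    using U(2,3) assms by (metis finite_imageD)
  ultimately show ?thesis
    using that U(1,2) by blast
qed

lemma ex_private_point:
  assumes "finite U" "U \<subseteq> R - red R G" "inj_on (level G) U" "u \<in> U"
  obtains q where "q \<in> level G u" "\<And>v. v \<in> U - {u} \<Longrightarrow> q \<notin> level G v"
proof (rule level_avoid[of "U - {u}" u])
  show "finite (U - {u})" "U - {u} \<subseteq> R"
    using assms(1,2) by auto
  show "level G u \<noteq> {}"
    using assms(2,4) level_nonempty_of_nonredundant by blast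
  show "\<not> level G u \<subseteq> level G v" if v: "v \<in> U - {u}" for v
  proof
    assume "level G u \<subseteq> level G v"
    then have "level G u = level G v"
      using assms(2,4) v unfolding red_def by blast
    then show False
      using assms(3,4) v by (auto dest: inj_onD)
  qed
qed blast

lemma level_subset_of_private_point:
  assumes "finite U" "representative R G U" "u \<in> U"
    and "q \<in> level G u" "\<And>v. v \<in> U - {u} \<Longrightarrow> q \<notin> level G v"
    and "q \<in> level G r"
  shows "level G r \<subseteq> level G u"
  using level_subset_level_of_representative[OF assms(1,2), of r] assms(3-) by blast

text \<open>Choosing, for each u in U, a report of S optimal at a point private to level G u gives an
  injection from U into S.\<close>
theorem ex_min_representative_of_finite_trim:
  assumes "finite (trim R G)"
  shows "\<exists>U. finite U \<and> min_representative R G U"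
proof -
  obtain U where U: "finite U" "U \<subseteq> R - red R G" "inj_on (level G) U" "representative R G U"
    by (rule ex_nonredundant_representative[OF assms])
  have "\<forall>u\<in>U. \<exists>q. q \<in> level G u \<and> (\<forall>v\<in>U - {u}. q \<notin> level G v)"
    using ex_private_point[OF U(1-3)] by (metis (no_types, lifting))
  then obtain q where q: "\<And>u. u \<in> U \<Longrightarrow> q u \<in> level G u"
    "\<And>u v. u \<in> U \<Longrightarrow> v \<in> U - {u} \<Longrightarrow> q u \<notin> level G v"
    using bchoice[of U] by (metis (no_types, lifting))
  have "\<exists>f. inj_on f U \<and> f ` U \<subseteq> S" if S: "representative R G S" for S
  proof -
    have "\<exists>s\<in>S. q u \<in> level G s" if "u \<in> U" for u
    proof -
      have "q u \<in> prob_simplex"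
        using q(1)[OF that] level_subset_prob_simplex[of G u] by blast
      then show ?thesis
        using S unfolding representative_iff_cover by blast
    qed
    then obtain f where f: "\<And>u. u \<in> U \<Longrightarrow> f u \<in> S \<and> q u \<in> level G (f u)"
      by metis
    have "inj_on f U"
    proof (rule inj_onI)
      fix u v assume uv: "u \<in> U" "v \<in> U" "f u = f v"
      have "level G (f u) \<subseteq> level G u"
        using U(1,4) uv(1) q(1,2)[OF uv(1)] conjunct2[OF f[OF uv(1)]]
        by (rule level_subset_of_private_point)
      then show "u = v"
        using f[OF uv(2)] q(2)[OF uv(2), of u] uv by auto
    qed
    then show ?thesis
      using f by blast
  qed
  then show ?thesis
    using U by (auto simp: min_representative_def)
qed

theorem trim_eq_levels_of_min_representative:
  assumes U: "finite U" "min_representative R G U"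
  shows "trim R G = level G ` U"
proof -
  have rep: "representative R G U"
    using U(2) by (simp add: min_representative_def)
  have "\<not> level G u \<subset> level G v" if "u \<in> U" "v \<in> U" for u v
  proof
    assume psubset: "level G u \<subset> level G v"
    then have "v \<noteq> u"
      by blast
    then have "representative R G (U - {u})"
      using rep that psubset by (intro representative_Diff_singleton) auto
    then obtain f where "inj_on f U" "f ` U \<subseteq> U - {u}"
      using U(2) by (auto simp: min_representative_def)
    then have "card U \<le> card (U - {u})"
      using U(1) by (intro card_inj_on_le) auto
    moreover have "card (U - {u}) < card U"
      using U(1) \<open>u \<in> U\<close> by (rule card_Diff1_less)
    ultimately show False
      by linarith
  qed
  then show ?thesis
    using trim_eq_maximal_levels[OF U(1) rep] by blast
qed

lemma representative_full_dim_levels: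
  assumes "finite U" "representative R G U"
  shows "representative R G {u \<in> U. full_dim (level G u)}"
proof -
  let ?F = "\<Union>u \<in> {u \<in> U. full_dim (level G u)}. level G u"
  have "prob_simplex \<subseteq> ?F"
  proof (rule prob_simplex_subset_closed_of_lowdim_cover)
    show "closed ?F"
      using assms(1) closed_level by auto
    show "finite (level G ` {u \<in> U. \<not> full_dim (level G u)})"
      using assms(1) by simp
    show "dim C < CARD('y)" if "C \<in> level G ` {u \<in> U. \<not> full_dim (level G u)}" for C
      using that full_dim_iff_dim[OF level_subset_prob_simplex] dim_subset_UNIV_cart
      by (fastforce simp: order_less_le)
    show "prob_simplex \<subseteq> ?F \<union> \<Union>(level G ` {u \<in> U. \<not> full_dim (level G u)})"
      using assms(2) unfolding representative_iff_cover by blast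
  qed
  then show ?thesis
    using assms(2) unfolding representative_iff_cover by auto
qed

lemma full_dim_level_of_nonredundant:
  assumes "finite U" "representative R G U" "r \<in> R - red R G"
  shows "full_dim (level G r)"
proof -
  obtain u where u: "u \<in> U" "full_dim (level G u)" "level G r \<subseteq> level G u"
    using level_subset_level_of_representative[OF _ representative_full_dim_levels[OF assms(1,2)]]
      assms(1)
    by auto
  then have "level G r = level G u"
    using assms(2,3) by (auto simp: red_def representative_def)
  then show ?thesis
    using u(2) by simp
qed

theorem full_dim_cover_of_finite_trim:
  assumes "finite (trim R G)"
  shows "\<forall>A\<in>trim R G. (\<exists>u. A = level G u) \<and> full_dim A" "\<Union>(trim R G) = prob_simplex"
proof -
  obtain U where "finite U" "U \<subseteq> R - red R G" "inj_on (level G) U" "representative R G U"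
    by (rule ex_nonredundant_representative[OF assms])
  then show "\<forall>A\<in>trim R G. (\<exists>u. A = level G u) \<and> full_dim A"
    using full_dim_level_of_nonredundant by (auto simp: trim_def)
  show "\<Union>(trim R G) = prob_simplex"
    using representative_nonredundant level_subset_prob_simplex[of G]
    unfolding representative_iff_cover trim_def by blast
qed

theorem trim_eq_full_dim_cover:
  assumes "finite \<Theta>" "\<forall>A\<in>\<Theta>. (\<exists>u. A = level G u) \<and> full_dim A" "\<Union>\<Theta> = prob_simplex"
  shows "trim R G = \<Theta>"
proof -
  have "\<Theta> \<subseteq> range (level G)"
    using assms(2) by blast
  then obtain U where U: "inj_on (level G) U" "\<Theta> = level G ` U"
    by (auto simp: subset_image_inj)
  have full_dim: "full_dim (level G u)" if "u \<in> U" for u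
    using assms(2) U(2) that by auto
  have "U \<subseteq> R"
    using full_dim full_dim_nonempty mem_R_of_level_nonempty by blast
  then have rep: "representative R G U"
    using assms(3) U(2) by (auto simp: representative_iff_cover)
  have fin: "finite U"
    using assms(1) U by (simp add: finite_image_iff)
  have "\<not> level G u \<subset> level G v" if "u \<in> U" "v \<in> U" for u v
    using nonredundant_of_full_dim[OF full_dim[OF that(1)]] \<open>U \<subseteq> R\<close> that
    by (auto simp: red_def)
  then show ?thesis
    using trim_eq_maximal_levels[OF fin rep] U(2) by blast
qed

lemma ex_embedded_finite_property:
  assumes "\<forall>r\<in>R. \<forall>y. 0 \<le> L r $ y" "finite U" "representative R G U"
  shows "\<exists>(S :: nat set) g. finite S \<and> elicitable S g \<and> embeds G S g"
proof -
  obtain e where e: "bij_betw e {0..<card U} U"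
    using ex_bij_betw_nat_finite[OF assms(2)] by blast
  define S where "S = {0..<card U}"
  define g where "g p = {k \<in> S. e k \<in> G p}" for p
  have eS: "e ` S = U"
    using e by (simp add: S_def bij_betw_def)
  have U: "U \<subseteq> R" "\<And>p. p \<in> prob_simplex \<Longrightarrow> \<exists>k\<in>S. e k \<in> G p"
    using assms(3) unfolding representative_def eS[symmetric] by blast+
  have "elicits (L \<circ> e) S g"
  proof
    fix p :: "real^'y" assume p: "p \<in> prob_simplex"
    then obtain k0 where k0: "k0 \<in> S" "e k0 \<in> G p"
      using U(2) by blast
    then show "g p \<noteq> {}"
      by (auto simp: g_def)
    show "g p = {k \<in> S. \<forall>k'\<in>S. p \<bullet> (L \<circ> e) k \<le> p \<bullet> (L \<circ> e) k'}"
      using k0 p U(1) eS by (auto simp: g_def G_eq intro: order_trans)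
  qed
  moreover have "\<forall>k\<in>S. \<forall>y. 0 \<le> (L \<circ> e) k $ y"
    using assms(1) U(1) eS by auto
  ultimately have "elicitable S g"
    unfolding elicitable_iff_elicits by blast
  moreover have "embeds G S g"
    unfolding embeds_def
  proof (intro exI conjI)
    show "representative S g S"
      using U(2) by (auto simp: representative_def g_def)
    show "inj_on e S"
      using e by (simp add: S_def bij_betw_def)
    show "\<forall>s\<in>S. level g s = level G (e s)"
      by (auto simp: level_def g_def)
  qed
  ultimately show ?thesis
    by (auto simp: S_def)
qed

end

lemma embeds_finite_representative:
  assumes "embeds G S g" "finite S"
  obtains T \<phi> where "finite T" "representative S g T" "representative UNIV G (\<phi> ` T)"
    "level G ` \<phi> ` T = level g ` T"
proof -
  obtain T \<phi> where T: "representative S g T" "\<forall>t\<in>T. level g t = level G (\<phi> t)"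
    using assms(1) by (auto simp: embeds_def)
  have "finite T"
    using T(1) assms(2) by (auto simp: representative_def intro: finite_subset)
  moreover have "level G ` \<phi> ` T = level g ` T"
    using T(2) by (auto simp: image_image)
  moreover have "representative UNIV G (\<phi> ` T)"
    using T(1) T(2) unfolding representative_iff_cover by auto
  ultimately show ?thesis
    using that T(1) by blast
qed

lemma trim_eq_of_embeds:
  assumes "elicits L UNIV G" "elicits L' S g" "finite S" "embeds G S g"
  shows "trim S g = trim UNIV G"
proof -
  interpret G: elicits L UNIV G by fact
  interpret g: elicits L' S g by fact
  obtain T \<phi> where T: "finite T" "representative S g T" "representative UNIV G (\<phi> ` T)"
    and same_levels: "level G ` \<phi> ` T = level g ` T"
    by (rule embeds_finite_representative[OF assms(4,3)])
  have "trim S g = {A \<in> level g ` T. \<forall>B \<in> level g ` T. \<not> A \<subset> B}"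
    using T(1,2) by (rule g.trim_eq_maximal_levels)
  also have "\<dots> = {A \<in> level G ` \<phi> ` T. \<forall>B \<in> level G ` \<phi> ` T. \<not> A \<subset> B}"
    by (simp only: same_levels)
  also have "\<dots> = trim UNIV G"
    using finite_imageI[OF T(1)] T(3) by (rule G.trim_eq_maximal_levels[symmetric])
  finally show ?thesis .
qed

theorem proposition6:
  fixes G :: "real ^ 'y \<Rightarrow> (real ^ 'd) set"
  assumes "elicitable UNIV G"
  shows "((\<exists>(R :: nat set) g. finite R \<and> elicitable R g \<and> embeds G R g)
           \<longleftrightarrow> finite (trim UNIV G))
       \<and> (finite (trim UNIV G) \<longleftrightarrow> (\<exists>U. finite U \<and> min_representative UNIV G U))
       \<and> ((\<exists>U. finite U \<and> min_representative UNIV G U) \<longleftrightarrow>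
           (\<exists>\<Theta>. finite \<Theta> \<and> (\<forall>A\<in>\<Theta>. (\<exists>u. A = level G u) \<and> full_dim A)
                 \<and> \<Union>\<Theta> = prob_simplex))
       \<and> (finite (trim UNIV G) \<longrightarrow>
           (\<forall>(R :: 'r set) g. finite R \<and> elicitable R g \<and> embeds G R g
               \<longrightarrow> trim R g = trim UNIV G)
         \<and> (\<forall>U. finite U \<and> min_representative UNIV G U \<longrightarrow> trim UNIV G = level G ` U)
         \<and> (\<forall>\<Theta>. finite \<Theta> \<and> (\<forall>A\<in>\<Theta>. (\<exists>u. A = level G u) \<and> full_dim A)
                 \<and> \<Union>\<Theta> = prob_simplex \<longrightarrow> trim UNIV G = \<Theta>))"
proof -
  obtain L where L_nonneg: "\<forall>r\<in>UNIV. \<forall>y. 0 \<le> L r $ y" and elicits: "elicits L UNIV G"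
    using assms by (auto simp: elicitable_iff_elicits)
  interpret elicits L UNIV G by (fact elicits)
  have finite_trim_iff_representative:
    "finite (trim UNIV G) \<longleftrightarrow> (\<exists>U. finite U \<and> representative UNIV G U)"
    using finite_trim_of_representative ex_nonredundant_representative by metis
  have "(\<exists>(R :: nat set) g. finite R \<and> elicitable R g \<and> embeds G R g) \<longleftrightarrow> finite (trim UNIV G)"
    using embeds_finite_representative finite_imageI ex_embedded_finite_property[OF L_nonneg]
    unfolding finite_trim_iff_representative by metis
  moreover have "finite (trim UNIV G) \<longleftrightarrow> (\<exists>U. finite U \<and> min_representative UNIV G U)"
    using ex_min_representative_of_finite_trim finite_trim_iff_representative
    by (auto simp: min_representative_def)
  moreover have "finite (trim UNIV G) \<longleftrightarrow>
      (\<exists>\<Theta>. finite \<Theta> \<and> (\<forall>A\<in>\<Theta>. (\<exists>u. A = level G u) \<and> full_dim A) \<and> \<Union>\<Theta> = prob_simplex)"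
    using full_dim_cover_of_finite_trim trim_eq_full_dim_cover by metis
  moreover have "trim R g = trim UNIV G" if "finite R" "elicitable R g" "embeds G R g"
    for R :: "'r set" and g
    using that trim_eq_of_embeds[OF elicits] by (auto simp: elicitable_iff_elicits)
  ultimately show ?thesis
    using trim_eq_levels_of_min_representative trim_eq_full_dim_cover by auto
qed

end
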